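(* Let $P$ and $P'$ be two populations with the same users, intervals $[l_i,r_i]$, speech points $p_i$, disutilities $b_i$, and initial adopters $\mathcal S_0$, differing only in personalization parameters, with $\lambda_i\ge\lambda_i'$ for all $i\in[n]$ (where $\lambda_i$ belongs to $P$ and $\lambda_i'$ to $P'$). Then $s_{\mathrm{opt}}(P)\le s_{\mathrm{opt}}(P')$.
   Context: A population consists of users $1,\dots,n$ and a set $\mathcal S_0$ of initial adopters; user $i$ has a closed interval $[l_i,r_i]$, speech point $p_i\in[l_i,r_i]$, disutility $b_i\ge0$ and personalization parameter $\lambda_i\in[0,1]$. For a set $\mathcal S\subseteq[n]$, user $i$'s utility is $u_i(\mathcal S)=\sum_{j\in\mathcal S\setminus\{i\}}\big(\mathbf 1[p_j\in[l_i,r_i]]-\lambda_ib_i\mathbf 1[p_j\notin[l_i,r_i]]\big)$. A compatible community is a set $\mathcal S$ with $u_i(\mathcal S)\ge0$ for all $i\in\mathcal S$; $s_{\mathrm{opt}}$ of a population is the maximum size of a compatible community. *)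

theory Defs
  imports Main "HOL-Analysis.Analysis"
begin

text \<open>Users are 0..n-1 (the paper's [n]). A population is given by
  intervals [l i, r i], speech points p i, disutilities b i, personalization
  parameters lam i and initial adopters S0 (the latter plays no role in s_opt).\<close>

definition valid_population ::
  "nat \<Rightarrow> (nat \<Rightarrow> real) \<Rightarrow> (nat \<Rightarrow> real) \<Rightarrow> (nat \<Rightarrow> real) \<Rightarrow> (nat \<Rightarrow> real)
   \<Rightarrow> (nat \<Rightarrow> real) \<Rightarrow> nat set \<Rightarrow> bool" where
  "valid_population n l r p b lam S0 \<longleftrightarrow>
     S0 \<subseteq> {..<n} \<and>
     (\<forall>i<n. l i \<le> p i \<and> p i \<le> r i \<and> 0 \<le> b i \<and> 0 \<le> lam i \<and> lam i \<le> 1)"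

definition utility ::
  "(nat \<Rightarrow> real) \<Rightarrow> (nat \<Rightarrow> real) \<Rightarrow> (nat \<Rightarrow> real) \<Rightarrow> (nat \<Rightarrow> real) \<Rightarrow> (nat \<Rightarrow> real)
   \<Rightarrow> nat set \<Rightarrow> nat \<Rightarrow> real" where
  "utility l r p b lam S i =
     (\<Sum>j\<in>S - {i}. (if p j \<in> {l i..r i} then 1 else 0)
                    - lam i * b i * (if p j \<notin> {l i..r i} then 1 else 0))"

definition compatible ::
  "nat \<Rightarrow> (nat \<Rightarrow> real) \<Rightarrow> (nat \<Rightarrow> real) \<Rightarrow> (nat \<Rightarrow> real) \<Rightarrow> (nat \<Rightarrow> real) \<Rightarrow> (nat \<Rightarrow> real)
   \<Rightarrow> nat set \<Rightarrow> bool" where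
  "compatible n l r p b lam S \<longleftrightarrow>
     S \<subseteq> {..<n} \<and> (\<forall>i\<in>S. utility l r p b lam S i \<ge> 0)"

definition s_opt ::
  "nat \<Rightarrow> (nat \<Rightarrow> real) \<Rightarrow> (nat \<Rightarrow> real) \<Rightarrow> (nat \<Rightarrow> real) \<Rightarrow> (nat \<Rightarrow> real) \<Rightarrow> (nat \<Rightarrow> real)
   \<Rightarrow> nat" where
  "s_opt n l r p b lam = Max {card S | S. compatible n l r p b lam S}"

end

theory Submission
  imports Defs
begin

text \<open>Lowering a personalization parameter only shrinks the nonnegative penalty
  \<open>lam i * b i\<close> paid for each out-of-interval member, so every utility weakly grows.
  Hence every community compatible under \<open>lam\<close> stays compatible under \<open>lam'\<close>, and
  \<open>s_opt\<close> is a maximum over a larger set.\<close>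

lemma utility_antimono_lam:
  assumes "0 \<le> b i" and "lam' i \<le> lam i"
  shows "utility l r p b lam S i \<le> utility l r p b lam' S i"
proof -
  have "lam' i * b i \<le> lam i * b i"
    using assms by (rule mult_right_mono[rotated])
  then show ?thesis
    unfolding utility_def by (intro sum_mono) auto
qed

lemma compatible_antimono_lam:
  assumes "\<forall>i<n. 0 \<le> b i" and "\<forall>i<n. lam' i \<le> lam i"
    and "compatible n l r p b lam S"
  shows "compatible n l r p b lam' S"
  unfolding compatible_def
proof (intro conjI ballI)
  show S_sub: "S \<subseteq> {..<n}"
    using assms(3) by (simp add: compatible_def)
  fix i assume "i \<in> S"
  with S_sub have "i < n" by blast
  have "0 \<le> utility l r p b lam S i"
    using assms(3) \<open>i \<in> S\<close> by (simp add: compatible_def)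
  also have "\<dots> \<le> utility l r p b lam' S i"
    using assms(1,2) \<open>i < n\<close> by (intro utility_antimono_lam) auto
  finally show "0 \<le> utility l r p b lam' S i" .
qed

lemma compatible_empty: "compatible n l r p b lam {}"
  by (simp add: compatible_def utility_def)

lemma finite_compatible_cards: "finite {card S | S. compatible n l r p b lam S}"
proof (rule finite_subset)
  show "{card S | S. compatible n l r p b lam S} \<subseteq> card ` Pow {..<n}"
    by (auto simp: compatible_def)
qed simp

lemma s_opt_mono_compatible:
  assumes "\<And>S. compatible n l r p b lam S \<Longrightarrow> compatible n l r p b lam' S"
  shows "s_opt n l r p b lam \<le> s_opt n l r p b lam'"
  unfolding s_opt_def
proof (rule Max_mono)
  show "{card S | S. compatible n l r p b lam S} \<subseteq> {card S | S. compatible n l r p b lam' S}"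
    using assms by blast
  show "{card S | S. compatible n l r p b lam S} \<noteq> {}"
    using compatible_empty by blast
qed (rule finite_compatible_cards)

theorem proposition5:
  fixes n :: nat and l r p b lam lam' :: "nat \<Rightarrow> real" and S0 :: "nat set"
  assumes "valid_population n l r p b lam S0"
    and "valid_population n l r p b lam' S0"
    and "\<forall>i<n. lam i \<ge> lam' i"
  shows "s_opt n l r p b lam \<le> s_opt n l r p b lam'"
proof (rule s_opt_mono_compatible)
  have "\<forall>i<n. 0 \<le> b i"
    using assms(1) by (simp add: valid_population_def)
  then show "compatible n l r p b lam' S" if "compatible n l r p b lam S" for S
    using assms(3) that by (rule compatible_antimono_lam)
qed

end
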